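(* Fix $L_0>0$. Uniformly over parameters $\mathbf x=(x^1,\dots,x^k)$ with $\|x^b\|\le L_0$ for all $b$, and for all $a,c\in[k]$ and $v\in\mathbb R^d$, as $\lambda\to\infty$, $$P_a^c=\bar\pi_c(a)+O(1/\lambda),\qquad Q_a^{c,v}=O(\|v\|/\lambda),$$ with implicit constants depending only on $k$ and $L_0$.
   Context: Let $\mu_1,\dots,\mu_k\in\mathbb R^d$ be unit vectors, $\lambda>0$, $Z_\lambda\sim\mathcal N(0,I_d/\lambda)$ and $Y_c=\mu_c+Z_\lambda$. For $\mathbf x=(x^1,\dots,x^k)\in(\mathbb R^d)^k$ define $\pi_{Y}(a)=\exp(x^a\cdot Y)/\sum_b\exp(x^b\cdot Y)$, $m_{ac}=x^a\cdot\mu_c$, $\bar\pi_c(a)=e^{m_{ac}}/\sum_be^{m_{bc}}$, $P_a^c=\mathbb E[\pi_{Y_c}(a)]$ and $Q_a^{c,v}=\mathbb E[\langle Z_\lambda,v\rangle\pi_{Y_c}(a)]$. *)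

theory Defs
  imports "HOL-Probability.Probability"
begin

text \<open>Vectors in R^d are represented as functions nat => real, only coordinates i < d matter.
  The k vectors mu_1..mu_k and x^1..x^k are indexed by c < k (0-based).\<close>

definition dinner :: "nat \<Rightarrow> (nat \<Rightarrow> real) \<Rightarrow> (nat \<Rightarrow> real) \<Rightarrow> real" where
  "dinner d u w = (\<Sum>i<d. u i * w i)"

definition dnorm :: "nat \<Rightarrow> (nat \<Rightarrow> real) \<Rightarrow> real" where
  "dnorm d u = sqrt (dinner d u u)"

text \<open>Law of Z_lambda ~ N(0, I_d / lambda): product of d centred normals with variance 1/lambda.\<close>
definition gauss :: "nat \<Rightarrow> real \<Rightarrow> (nat \<Rightarrow> real) measure" where
  "gauss d lam = PiM {..<d} (\<lambda>_. density lborel (normal_density 0 (1 / sqrt lam)))"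

definition softmax_Y :: "nat \<Rightarrow> nat \<Rightarrow> (nat \<Rightarrow> nat \<Rightarrow> real) \<Rightarrow> (nat \<Rightarrow> real) \<Rightarrow> nat \<Rightarrow> real" where
  "softmax_Y d k x y a = exp (dinner d (x a) y) / (\<Sum>b<k. exp (dinner d (x b) y))"

definition pibar :: "nat \<Rightarrow> nat \<Rightarrow> (nat \<Rightarrow> nat \<Rightarrow> real) \<Rightarrow> (nat \<Rightarrow> nat \<Rightarrow> real) \<Rightarrow> nat \<Rightarrow> nat \<Rightarrow> real" where
  "pibar d k x mu c a = exp (dinner d (x a) (mu c)) / (\<Sum>b<k. exp (dinner d (x b) (mu c)))"

definition Pac :: "nat \<Rightarrow> nat \<Rightarrow> real \<Rightarrow> (nat \<Rightarrow> nat \<Rightarrow> real) \<Rightarrow> (nat \<Rightarrow> nat \<Rightarrow> real) \<Rightarrow> nat \<Rightarrow> nat \<Rightarrow> real" where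
  "Pac d k lam x mu c a =
     (\<integral>z. softmax_Y d k x (\<lambda>i. mu c i + z i) a \<partial>gauss d lam)"

definition Qacv :: "nat \<Rightarrow> nat \<Rightarrow> real \<Rightarrow> (nat \<Rightarrow> nat \<Rightarrow> real) \<Rightarrow> (nat \<Rightarrow> nat \<Rightarrow> real) \<Rightarrow> nat \<Rightarrow> nat \<Rightarrow> (nat \<Rightarrow> real) \<Rightarrow> real" where
  "Qacv d k lam x mu c a v =
     (\<integral>z. dinner d z v * softmax_Y d k x (\<lambda>i. mu c i + z i) a \<partial>gauss d lam)"

end

theory Submission
  imports Defs
begin

text \<open>Write \<open>p(r)\<close> for the softmax weights of \<open>s + r t\<close> and \<open>m(r)\<close>, \<open>V(r)\<close> for the mean
  and variance of \<open>t\<close> under \<open>p(r)\<close>. Then \<open>p\<^sub>a' = p\<^sub>a (t\<^sub>a - m)\<close>, \<open>m' = V\<close>, hence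
  \<open>p\<^sub>a'' = p\<^sub>a ((t\<^sub>a - m)\<^sup>2 - V)\<close>, and \<open>\<bar>p\<^sub>a'\<bar> \<le> 2 \<Sum>\<^sub>b \<bar>t\<^sub>b\<bar>\<close>, \<open>\<bar>p\<^sub>a''\<bar> \<le> 4 \<Sum>\<^sub>b t\<^sub>b\<^sup>2\<close>.
  With \<open>s\<^sub>b = x\<^sup>b \<cdot> \<mu>\<^sub>c\<close> and \<open>t\<^sub>b = x\<^sup>b \<cdot> Z\<close>, the first-order Taylor term of \<open>\<pi>\<^sub>Y(a)\<close>
  around \<open>pibar\<close> is linear in \<open>Z\<close>, so it has mean zero and
  \<open>\<bar>P - pibar\<bar> \<le> 2 \<Sum>\<^sub>b E t\<^sub>b\<^sup>2 = 2 \<Sum>\<^sub>b \<parallel>x\<^sup>b\<parallel>\<^sup>2 / \<lambda>\<close>. For \<open>Q\<close>, \<open>E \<langle>Z, v\<rangle> = 0\<close> allows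
  subtracting \<open>pibar\<close> inside the expectation; the Lipschitz bound and Cauchy--Schwarz then give
  \<open>\<bar>Q\<bar> \<le> 2 \<Sum>\<^sub>b sqrt (E \<langle>Z, v\<rangle>\<^sup>2 E t\<^sub>b\<^sup>2) = 2 \<parallel>v\<parallel> \<Sum>\<^sub>b \<parallel>x\<^sup>b\<parallel> / \<lambda>\<close>.\<close>

section \<open>Softmax along a line\<close>

definition softmax :: "nat \<Rightarrow> (nat \<Rightarrow> real) \<Rightarrow> nat \<Rightarrow> real" where
  "softmax k s a = exp (s a) / (\<Sum>b<k. exp (s b))"

definition softmax_mean :: "nat \<Rightarrow> (nat \<Rightarrow> real) \<Rightarrow> (nat \<Rightarrow> real) \<Rightarrow> real" where
  "softmax_mean k s t = (\<Sum>b<k. softmax k s b * t b)"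

definition softmax_var :: "nat \<Rightarrow> (nat \<Rightarrow> real) \<Rightarrow> (nat \<Rightarrow> real) \<Rightarrow> real" where
  "softmax_var k s t = (\<Sum>b<k. softmax k s b * (t b - softmax_mean k s t)\<^sup>2)"

lemma sum_exp_pos: "0 < (k::nat) \<Longrightarrow> 0 < (\<Sum>b<k. exp (s b :: real))"
  by (rule sum_pos) auto

lemma softmax_nonneg: "0 \<le> softmax k s a"
  unfolding softmax_def by (intro divide_nonneg_nonneg sum_nonneg) auto

lemma sum_softmax: "0 < k \<Longrightarrow> (\<Sum>b<k. softmax k s b) = 1"
  unfolding softmax_def using sum_exp_pos[of k s] by (simp add: sum_divide_distrib [symmetric])

lemma softmax_le_one: "a < k \<Longrightarrow> softmax k s a \<le> 1"
proof -
  assume "a < k"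
  then have "exp (s a) \<le> (\<Sum>b<k. exp (s b))"
    by (intro member_le_sum) auto
  then show ?thesis
    unfolding softmax_def using sum_exp_pos[of k s] \<open>a < k\<close> by simp
qed

lemma abs_softmax_mean_le: "\<bar>softmax_mean k s t\<bar> \<le> (\<Sum>b<k. \<bar>t b\<bar>)"
proof -
  have "\<bar>softmax_mean k s t\<bar> \<le> (\<Sum>b<k. softmax k s b * \<bar>t b\<bar>)"
    unfolding softmax_mean_def
    using sum_abs[of "\<lambda>b. softmax k s b * t b" "{..<k}"] by (simp add: abs_mult softmax_nonneg)
  also have "\<dots> \<le> (\<Sum>b<k. \<bar>t b\<bar>)"
    by (intro sum_mono mult_left_le_one_le) (auto simp: softmax_le_one softmax_nonneg)
  finally show ?thesis .
qed

lemma sum_softmax_mult_centered: "0 < k \<Longrightarrow> (\<Sum>b<k. softmax k s b * (t b - softmax_mean k s t)) = 0"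
  by (simp add: right_diff_distrib sum_subtractf softmax_mean_def sum_distrib_right [symmetric]
      sum_softmax)

lemma softmax_var_eq_sum_centered_mult:
  assumes "0 < k"
  shows "softmax_var k s t = (\<Sum>b<k. softmax k s b * (t b - softmax_mean k s t) * t b)"
proof -
  let ?p = "softmax k s" and ?m = "softmax_mean k s t"
  have "softmax_var k s t = (\<Sum>b<k. ?p b * (t b - ?m) * t b) - ?m * (\<Sum>b<k. ?p b * (t b - ?m))"
    unfolding softmax_var_def
    by (simp add: sum_distrib_left sum_subtractf [symmetric] power2_eq_square algebra_simps)
  then show ?thesis
    using sum_softmax_mult_centered [OF assms] by simp
qed

lemma softmax_var_eq:
  assumes "0 < k"
  shows "softmax_var k s t = (\<Sum>b<k. softmax k s b * (t b)\<^sup>2) - (softmax_mean k s t)\<^sup>2"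
  unfolding softmax_var_eq_sum_centered_mult [OF assms]
  by (simp add: sum_subtractf sum_distrib_left algebra_simps power2_eq_square softmax_mean_def)

lemma has_real_derivative_softmax_line:
  assumes "0 < k"
  shows "((\<lambda>r. softmax k (\<lambda>b. s b + r * t b) a) has_real_derivative
           softmax k (\<lambda>b. s b + r * t b) a * (t a - softmax_mean k (\<lambda>b. s b + r * t b) t)) (at r)"
proof -
  define Z where "Z r = (\<Sum>b<k. exp (s b + r * t b))" for r
  have Z_pos: "0 < Z r"
    unfolding Z_def using sum_exp_pos [OF assms] .
  have deriv: "((\<lambda>r. softmax k (\<lambda>b. s b + r * t b) a) has_real_derivative
          (exp (s a + r * t a) * t a * Z r - exp (s a + r * t a) * (\<Sum>b<k. exp (s b + r * t b) * t b))
            / (Z r * Z r)) (at r)"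
    unfolding softmax_def Z_def using Z_pos [unfolded Z_def] by (auto intro!: derivative_eq_intros)
  have "softmax_mean k (\<lambda>b. s b + r * t b) t = (\<Sum>b<k. exp (s b + r * t b) * t b) / Z r"
    unfolding softmax_mean_def softmax_def Z_def by (simp add: sum_divide_distrib)
  then have "(exp (s a + r * t a) * t a * Z r - exp (s a + r * t a) * (\<Sum>b<k. exp (s b + r * t b) * t b))
      / (Z r * Z r) = softmax k (\<lambda>b. s b + r * t b) a * (t a - softmax_mean k (\<lambda>b. s b + r * t b) t)"
    using Z_pos unfolding softmax_def Z_def [symmetric] by (simp add: field_simps)
  with deriv show ?thesis
    by simp
qed

lemma has_real_derivative_softmax_mean_line:
  assumes "0 < k"
  shows "((\<lambda>r. softmax_mean k (\<lambda>b. s b + r * t b) t) has_real_derivative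
           softmax_var k (\<lambda>b. s b + r * t b) t) (at r)"
proof -
  let ?p = "softmax k (\<lambda>b. s b + r * t b)" and ?m = "softmax_mean k (\<lambda>b. s b + r * t b) t"
  have "(\<lambda>r. softmax_mean k (\<lambda>b. s b + r * t b) t) = (\<lambda>r. \<Sum>b<k. softmax k (\<lambda>b. s b + r * t b) b * t b)"
    by (simp add: softmax_mean_def)
  moreover have "((\<lambda>r. \<Sum>b<k. softmax k (\<lambda>b. s b + r * t b) b * t b) has_real_derivative
          (\<Sum>b<k. ?p b * (t b - ?m) * t b)) (at r)"
    by (intro DERIV_sum DERIV_cmult_right has_real_derivative_softmax_line [OF assms])
  ultimately show ?thesis
    by (simp add: softmax_var_eq_sum_centered_mult [OF assms])
qed

lemma has_real_derivative_softmax_line_deriv: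
  assumes "0 < k"
  shows "((\<lambda>r. softmax k (\<lambda>b. s b + r * t b) a * (t a - softmax_mean k (\<lambda>b. s b + r * t b) t))
           has_real_derivative softmax k (\<lambda>b. s b + r * t b) a *
             ((t a - softmax_mean k (\<lambda>b. s b + r * t b) t)\<^sup>2 - softmax_var k (\<lambda>b. s b + r * t b) t)) (at r)"
  by (auto intro!: derivative_eq_intros has_real_derivative_softmax_line [OF assms]
        has_real_derivative_softmax_mean_line [OF assms] simp: power2_eq_square algebra_simps)

lemma sum_softmax_mult_le: "(\<Sum>b<k. softmax k s b * u b) \<le> (\<Sum>b<k. u b)" if "\<And>b. 0 \<le> u b"
  using that by (intro sum_mono mult_left_le_one_le) (auto simp: softmax_le_one softmax_nonneg)

lemma softmax_var_nonneg: "0 \<le> softmax_var k s t"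
  unfolding softmax_var_def by (intro sum_nonneg mult_nonneg_nonneg softmax_nonneg) auto

lemma softmax_mean_sq_le:
  assumes "0 < k"
  shows "(softmax_mean k s t)\<^sup>2 \<le> (\<Sum>b<k. (t b)\<^sup>2)"
  using softmax_var_nonneg [of k s t] sum_softmax_mult_le [of "\<lambda>b. (t b)\<^sup>2" k s]
  unfolding softmax_var_eq [OF assms] by simp

lemma softmax_var_le:
  assumes "0 < k"
  shows "softmax_var k s t \<le> (\<Sum>b<k. (t b)\<^sup>2)"
  using sum_softmax_mult_le [of "\<lambda>b. (t b)\<^sup>2" k s, OF zero_le_power2]
    zero_le_power2 [of "softmax_mean k s t"]
  unfolding softmax_var_eq [OF assms] by linarith

lemma abs_softmax_line_deriv_le:
  assumes "a < k"
  shows "\<bar>softmax k s a * (t a - softmax_mean k s t)\<bar> \<le> 2 * (\<Sum>b<k. \<bar>t b\<bar>)"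
proof -
  have "\<bar>t a\<bar> \<le> (\<Sum>b<k. \<bar>t b\<bar>)"
    using assms by (intro member_le_sum) auto
  then have "\<bar>t a - softmax_mean k s t\<bar> \<le> 2 * (\<Sum>b<k. \<bar>t b\<bar>)"
    using abs_softmax_mean_le [of k s t] by linarith
  moreover have "\<bar>softmax k s a * (t a - softmax_mean k s t)\<bar> \<le> \<bar>t a - softmax_mean k s t\<bar>"
    unfolding abs_mult using softmax_nonneg [of k s a] softmax_le_one [OF assms, of s]
    by (intro mult_left_le_one_le) auto
  ultimately show ?thesis
    by linarith
qed

lemma abs_softmax_line_deriv2_le:
  assumes "a < k"
  shows "\<bar>softmax k s a * ((t a - softmax_mean k s t)\<^sup>2 - softmax_var k s t)\<bar> \<le> 4 * (\<Sum>b<k. (t b)\<^sup>2)"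
proof -
  let ?m = "softmax_mean k s t" and ?S = "\<Sum>b<k. (t b)\<^sup>2"
  have k: "0 < k"
    using assms by simp
  have "(t a)\<^sup>2 \<le> ?S"
    using assms by (intro member_le_sum) auto
  moreover have "(t a - ?m)\<^sup>2 \<le> 2 * (t a)\<^sup>2 + 2 * ?m\<^sup>2"
    using zero_le_power2 [of "t a + ?m"] unfolding power2_diff power2_sum by linarith
  ultimately have "(t a - ?m)\<^sup>2 \<le> 4 * ?S"
    using softmax_mean_sq_le [OF k, of s t] by linarith
  then have "\<bar>(t a - ?m)\<^sup>2 - softmax_var k s t\<bar> \<le> 4 * ?S"
    using softmax_var_nonneg [of k s t] softmax_var_le [OF k, of s t] zero_le_power2 [of "t a - ?m"]
    by linarith
  moreover have "\<bar>softmax k s a * ((t a - ?m)\<^sup>2 - softmax_var k s t)\<bar> \<le> \<bar>(t a - ?m)\<^sup>2 - softmax_var k s t\<bar>"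
    unfolding abs_mult using softmax_nonneg [of k s a] softmax_le_one [OF assms, of s]
    by (intro mult_left_le_one_le) auto
  ultimately show ?thesis
    by linarith
qed

lemma softmax_add_lipschitz:
  assumes "a < k"
  shows "\<bar>softmax k (\<lambda>b. s b + t b) a - softmax k s a\<bar> \<le> 2 * (\<Sum>b<k. \<bar>t b\<bar>)"
proof -
  have k: "0 < k"
    using assms by simp
  have "\<exists>r>0. r < 1 \<and> softmax k (\<lambda>b. s b + 1 * t b) a - softmax k (\<lambda>b. s b + 0 * t b) a
      = (1 - 0) * (softmax k (\<lambda>b. s b + r * t b) a * (t a - softmax_mean k (\<lambda>b. s b + r * t b) t))"
    by (rule MVT2) (auto intro: has_real_derivative_softmax_line [OF k])
  then obtain r where "softmax k (\<lambda>b. s b + t b) a - softmax k s a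
      = softmax k (\<lambda>b. s b + r * t b) a * (t a - softmax_mean k (\<lambda>b. s b + r * t b) t)"
    by auto
  then show ?thesis
    using abs_softmax_line_deriv_le [OF assms, of "\<lambda>b. s b + r * t b" t] by simp
qed

lemma softmax_add_taylor:
  assumes "a < k"
  shows "\<bar>softmax k (\<lambda>b. s b + t b) a - softmax k s a - softmax k s a * (t a - softmax_mean k s t)\<bar>
           \<le> 2 * (\<Sum>b<k. (t b)\<^sup>2)"
proof -
  have k: "0 < k"
    using assms by simp
  define g where "g r = softmax k (\<lambda>b. s b + r * t b) a" for r
  define g' where "g' r = softmax k (\<lambda>b. s b + r * t b) a *
      (t a - softmax_mean k (\<lambda>b. s b + r * t b) t)" for r
  define g'' where "g'' r = softmax k (\<lambda>b. s b + r * t b) a *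
      ((t a - softmax_mean k (\<lambda>b. s b + r * t b) t)\<^sup>2 - softmax_var k (\<lambda>b. s b + r * t b) t)" for r
  define diff where "diff n = (if n = 0 then g else if n = 1 then g' else g'')" for n :: nat
  have "\<exists>r>0. r < 1 \<and> g 1 = (\<Sum>n<2. diff n 0 / fact n * 1 ^ n) + diff 2 r / fact 2 * 1 ^ 2"
    by (rule Maclaurin)
      (auto simp: diff_def less_2_cases_iff g_def g'_def g''_def
        has_real_derivative_softmax_line [OF k] has_real_derivative_softmax_line_deriv [OF k])
  then obtain r where "g 1 = g 0 + g' 0 + g'' r / 2"
    by (auto simp: diff_def numeral_2_eq_2)
  then show ?thesis
    using abs_softmax_line_deriv2_le [OF assms, of "\<lambda>b. s b + r * t b" t]
    by (simp add: g_def g'_def g''_def)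
qed

section \<open>Expectations of a randomly shifted softmax\<close>

lemma Cauchy_Schwarz_integral:
  fixes f g :: "'a \<Rightarrow> real"
  assumes [measurable]: "f \<in> borel_measurable M" "g \<in> borel_measurable M"
    and f2: "integrable M (\<lambda>x. (f x)\<^sup>2)" and g2: "integrable M (\<lambda>x. (g x)\<^sup>2)"
  shows "integrable M (\<lambda>x. f x * g x)"
    and "(\<integral>x. \<bar>f x * g x\<bar> \<partial>M) \<le> sqrt (\<integral>x. (f x)\<^sup>2 \<partial>M) * sqrt (\<integral>x. (g x)\<^sup>2 \<partial>M)"
proof -
  have "\<bar>f x * g x\<bar> \<le> (f x)\<^sup>2 + (g x)\<^sup>2" for x
    using zero_le_power2 [of "\<bar>f x\<bar> - \<bar>g x\<bar>"] zero_le_power2 [of "f x"] zero_le_power2 [of "g x"]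
    unfolding power2_diff power2_abs abs_mult by linarith
  then show int: "integrable M (\<lambda>x. f x * g x)"
    by (intro Bochner_Integration.integrable_bound [OF Bochner_Integration.integrable_add [OF f2 g2]]) auto
  let ?I = "\<integral>x. \<bar>f x * g x\<bar> \<partial>M" and ?A = "\<integral>x. (f x)\<^sup>2 \<partial>M" and ?B = "\<integral>x. (g x)\<^sup>2 \<partial>M"
  have "ennreal ?I = (\<integral>\<^sup>+x. ennreal \<bar>f x\<bar> * ennreal \<bar>g x\<bar> \<partial>M)"
    using nn_integral_eq_integral [OF integrable_abs [OF int]] by (simp add: abs_mult ennreal_mult)
  moreover have "(\<integral>\<^sup>+x. (ennreal \<bar>h x\<bar>)\<^sup>2 \<partial>M) = ennreal (\<integral>x. (h x)\<^sup>2 \<partial>M)"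
    if "integrable M (\<lambda>x. (h x)\<^sup>2)" for h
    using that by (simp add: nn_integral_eq_integral [symmetric] ennreal_power)
  ultimately have "ennreal ?I ^ 2 \<le> ennreal ?A * ennreal ?B"
    using Cauchy_Schwarz_nn_integral [of "\<lambda>x. ennreal \<bar>f x\<bar>" M "\<lambda>x. ennreal \<bar>g x\<bar>"] f2 g2 by simp
  then have "?I\<^sup>2 \<le> ?A * ?B"
    by (simp add: ennreal_power ennreal_mult [symmetric] integral_nonneg_AE ennreal_le_iff)
  then show "?I \<le> sqrt ?A * sqrt ?B"
    by (simp add: real_le_rsqrt real_sqrt_mult [symmetric])
qed

lemma abs_integral_le_integral:
  fixes f g :: "'a \<Rightarrow> real"
  assumes "integrable M g" "\<And>x. x \<in> space M \<Longrightarrow> \<bar>f x\<bar> \<le> g x"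
  shows "\<bar>\<integral>x. f x \<partial>M\<bar> \<le> (\<integral>x. g x \<partial>M)"
proof -
  have "\<bar>\<integral>x. f x \<partial>M\<bar> \<le> (\<integral>x. \<bar>f x\<bar> \<partial>M)"
    using integral_norm_bound [of M f] by simp
  also have "\<dots> \<le> (\<integral>x. g x \<partial>M)"
    using assms by (intro integral_mono') (auto intro: order_trans [OF abs_ge_zero])
  finally show ?thesis .
qed

lemma (in prob_space) abs_expectation_softmax_add_le:
  assumes a: "a < k"
    and T_meas: "\<And>b. b < k \<Longrightarrow> T b \<in> borel_measurable M"
    and T_sq: "\<And>b. b < k \<Longrightarrow> integrable M (\<lambda>z. (T b z)\<^sup>2)"
    and T_mean: "\<And>b. b < k \<Longrightarrow> (\<integral>z. T b z \<partial>M) = 0"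
  shows "\<bar>(\<integral>z. softmax k (\<lambda>b. s b + T b z) a \<partial>M) - softmax k s a\<bar> \<le> 2 * (\<Sum>b<k. \<integral>z. (T b z)\<^sup>2 \<partial>M)"
proof -
  define F where "F z = softmax k (\<lambda>b. s b + T b z) a" for z
  define L where "L z = softmax k s a * (T a z - (\<Sum>b<k. softmax k s b * T b z))" for z
  have T_int: "integrable M (T b)" if "b < k" for b
    using square_integrable_imp_integrable [OF T_meas [OF that] T_sq [OF that]] .
  have F_meas: "F \<in> borel_measurable M"
    unfolding F_def softmax_def using T_meas a by (auto intro!: borel_measurable_sum)
  have F_int: "integrable M F"
    by (rule integrable_const_bound [where B = 1]) (auto simp: F_def softmax_nonneg softmax_le_one a F_meas)
  have mix_int: "integrable M (\<lambda>z. \<Sum>b<k. softmax k s b * T b z)"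
    and mix_mean: "(\<integral>z. (\<Sum>b<k. softmax k s b * T b z) \<partial>M) = 0"
    using T_int T_mean by (auto simp: Bochner_Integration.integral_sum)
  have L_int: "integrable M L" and L_mean: "(\<integral>z. L z \<partial>M) = 0"
    unfolding L_def using T_int T_mean a mix_int mix_mean by simp_all
  have sq_int: "integrable M (\<lambda>z. 2 * (\<Sum>b<k. (T b z)\<^sup>2))"
    using T_sq by auto
  have "(\<integral>z. F z \<partial>M) - softmax k s a = (\<integral>z. F z - softmax k s a - L z \<partial>M)"
    using F_int L_int L_mean by (simp add: prob_space)
  also have "\<bar>\<dots>\<bar> \<le> (\<integral>z. 2 * (\<Sum>b<k. (T b z)\<^sup>2) \<partial>M)"
    using sq_int softmax_add_taylor [OF a, of s "\<lambda>b. T b _"]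
    by (intro abs_integral_le_integral) (simp_all add: F_def L_def softmax_mean_def)
  also have "\<dots> = 2 * (\<Sum>b<k. \<integral>z. (T b z)\<^sup>2 \<partial>M)"
    using T_sq by (simp add: Bochner_Integration.integral_sum)
  finally show ?thesis
    unfolding F_def .
qed

lemma (in prob_space) abs_expectation_mult_softmax_add_le:
  assumes a: "a < k"
    and T_meas: "\<And>b. b < k \<Longrightarrow> T b \<in> borel_measurable M"
    and T_sq: "\<And>b. b < k \<Longrightarrow> integrable M (\<lambda>z. (T b z)\<^sup>2)"
    and W_meas: "W \<in> borel_measurable M"
    and W_sq: "integrable M (\<lambda>z. (W z)\<^sup>2)"
    and W_mean: "(\<integral>z. W z \<partial>M) = 0"
  shows "\<bar>\<integral>z. W z * softmax k (\<lambda>b. s b + T b z) a \<partial>M\<bar>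
           \<le> 2 * (\<Sum>b<k. sqrt (\<integral>z. (W z)\<^sup>2 \<partial>M) * sqrt (\<integral>z. (T b z)\<^sup>2 \<partial>M))"
proof -
  define F where "F z = softmax k (\<lambda>b. s b + T b z) a" for z
  have W_int: "integrable M W"
    using square_integrable_imp_integrable [OF W_meas W_sq] .
  have F_meas: "F \<in> borel_measurable M"
    unfolding F_def softmax_def using T_meas a by (auto intro!: borel_measurable_sum)
  have "\<bar>F z\<bar> \<le> 1" for z
    unfolding F_def using softmax_nonneg softmax_le_one [OF a] by simp
  then have WF_int: "integrable M (\<lambda>z. W z * F z)"
    by (intro Bochner_Integration.integrable_bound [OF W_int])
      (auto simp: abs_mult intro!: mult_left_le borel_measurable_times F_meas W_meas)
  have WT_int: "integrable M (\<lambda>z. \<bar>W z * T b z\<bar>)" if "b < k" for b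
    using Cauchy_Schwarz_integral(1) [OF W_meas T_meas W_sq T_sq, OF that that] by auto
  have "(\<integral>z. W z * F z \<partial>M) = (\<integral>z. W z * (F z - softmax k s a) \<partial>M)"
    using WF_int W_int W_mean by (simp add: right_diff_distrib)
  also have "\<bar>\<dots>\<bar> \<le> (\<integral>z. 2 * (\<Sum>b<k. \<bar>W z * T b z\<bar>) \<partial>M)"
  proof (rule abs_integral_le_integral)
    show "integrable M (\<lambda>z. 2 * (\<Sum>b<k. \<bar>W z * T b z\<bar>))"
      using WT_int by auto
    fix z
    have "\<bar>W z * (F z - softmax k s a)\<bar> \<le> \<bar>W z\<bar> * (2 * (\<Sum>b<k. \<bar>T b z\<bar>))"
      unfolding abs_mult F_def by (intro mult_left_mono softmax_add_lipschitz [OF a]) auto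
    then show "\<bar>W z * (F z - softmax k s a)\<bar> \<le> 2 * (\<Sum>b<k. \<bar>W z * T b z\<bar>)"
      by (simp add: abs_mult sum_distrib_left mult.left_commute)
  qed
  also have "\<dots> = 2 * (\<Sum>b<k. \<integral>z. \<bar>W z * T b z\<bar> \<partial>M)"
    using WT_int by (simp add: Bochner_Integration.integral_sum)
  also have "\<dots> \<le> 2 * (\<Sum>b<k. sqrt (\<integral>z. (W z)\<^sup>2 \<partial>M) * sqrt (\<integral>z. (T b z)\<^sup>2 \<partial>M))"
    using Cauchy_Schwarz_integral(2) [OF W_meas T_meas W_sq T_sq] by (intro mult_left_mono sum_mono) auto
  finally show ?thesis
    unfolding F_def .
qed

section \<open>The Gaussian shift\<close>

lemma normal_density_centered_moments:
  fixes \<sigma> :: real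
  assumes "0 < \<sigma>"
  defines "G \<equiv> density lborel (normal_density 0 \<sigma>)"
  shows "prob_space G"
    and "integrable G (\<lambda>t. t)" "(\<integral>t. t \<partial>G) = 0"
    and "integrable G (\<lambda>t. t\<^sup>2)" "(\<integral>t. t\<^sup>2 \<partial>G) = \<sigma>\<^sup>2"
proof -
  show "prob_space G"
    unfolding G_def by (rule prob_space_normal_density [OF assms(1)])
  show "integrable G (\<lambda>t. t)" "(\<integral>t. t \<partial>G) = 0"
    unfolding G_def
    using integrable_normal_moment_nz_1 [OF assms(1)] integral_normal_moment_nz_1 [OF assms(1)]
    by (simp_all add: integrable_density integral_density)
  have "has_bochner_integral lborel (\<lambda>t. normal_density 0 \<sigma> t * t\<^sup>2) (\<sigma>\<^sup>2)"
    using normal_moment_even [OF assms(1), of 0 1] by simp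
  then show "integrable G (\<lambda>t. t\<^sup>2)" "(\<integral>t. t\<^sup>2 \<partial>G) = \<sigma>\<^sup>2"
    unfolding G_def
    by (simp_all add: integrable_density integral_density integrable.intros has_bochner_integral_integral_eq)
qed

lemma prob_space_gauss: "0 < lam \<Longrightarrow> prob_space (gauss d lam)"
  unfolding gauss_def by (intro prob_space_PiM normal_density_centered_moments(1)) simp

lemma gauss_integral_prod:
  fixes f :: "nat \<Rightarrow> real \<Rightarrow> real"
  assumes lam: "0 < lam"
  defines "G \<equiv> density lborel (normal_density 0 (1 / sqrt lam))"
  assumes f: "\<And>l. l < d \<Longrightarrow> integrable G (f l)"
  shows "integrable (gauss d lam) (\<lambda>z. \<Prod>l<d. f l (z l))"
    and "(\<integral>z. (\<Prod>l<d. f l (z l)) \<partial>gauss d lam) = (\<Prod>l<d. \<integral>t. f l t \<partial>G)"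
proof -
  have "prob_space G"
    unfolding G_def using lam by (intro normal_density_centered_moments) simp
  then interpret product_prob_space "\<lambda>_. G" "{..<d}"
    by (simp add: product_prob_space_def product_sigma_finite_def product_prob_space_axioms_def
        prob_space_imp_sigma_finite)
  have gauss: "gauss d lam = Pi\<^sub>M {..<d} (\<lambda>_. G)"
    unfolding gauss_def G_def ..
  show "integrable (gauss d lam) (\<lambda>z. \<Prod>l<d. f l (z l))"
    unfolding gauss using product_integrable_prod [of "{..<d}" f] f by simp
  show "(\<integral>z. (\<Prod>l<d. f l (z l)) \<partial>gauss d lam) = (\<Prod>l<d. \<integral>t. f l t \<partial>G)"
    unfolding gauss using product_integral_prod [of "{..<d}" f] f by simp
qed

lemma gauss_coordinate_mean:
  assumes lam: "0 < lam" and i: "i < d"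
  shows "integrable (gauss d lam) (\<lambda>z. z i)" "(\<integral>z. z i \<partial>gauss d lam) = 0"
proof -
  define G where "G = density lborel (normal_density 0 (1 / sqrt lam))"
  define f where "f l t = (if l = i then t else 1 :: real)" for l t
  interpret G: prob_space G
    unfolding G_def using lam by (intro normal_density_centered_moments) simp
  have G: "integrable G (\<lambda>t. t)" "(\<integral>t. t \<partial>G) = 0"
    using normal_density_centered_moments(2,3) [of "1 / sqrt lam"] lam by (simp_all add: G_def)
  have f_cases: "f l = (if l = i then (\<lambda>t. t) else (\<lambda>_. 1))" for l
    by (simp add: f_def fun_eq_iff)
  have f_int: "integrable G (f l)" for l
    unfolding f_cases using G by simp
  have "(\<Prod>l<d. f l (z l)) = z i" for z
    unfolding f_def using i by simp
  moreover have "(\<Prod>l<d. \<integral>t. f l t \<partial>G) = 0"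
    using i G by (intro prod_zero) (auto simp: f_cases)
  ultimately show "integrable (gauss d lam) (\<lambda>z. z i)" "(\<integral>z. z i \<partial>gauss d lam) = 0"
    using gauss_integral_prod [OF lam, of d f, folded G_def] f_int by simp_all
qed

lemma gauss_coordinate_covariance:
  assumes lam: "0 < lam" and i: "i < d" and j: "j < d"
  shows "integrable (gauss d lam) (\<lambda>z. z i * z j)"
    "(\<integral>z. z i * z j \<partial>gauss d lam) = (if i = j then 1 / lam else 0)"
proof -
  define G where "G = density lborel (normal_density 0 (1 / sqrt lam))"
  define f where "f l t = (if l = i then t else 1) * (if l = j then t else 1 :: real)" for l t
  interpret G: prob_space G
    unfolding G_def using lam by (intro normal_density_centered_moments) simp
  have G: "integrable G (\<lambda>t. t)" "(\<integral>t. t \<partial>G) = 0"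
      "integrable G (\<lambda>t. t\<^sup>2)" "(\<integral>t. t\<^sup>2 \<partial>G) = 1 / lam"
    using normal_density_centered_moments(2-5) [of "1 / sqrt lam"] lam
    by (simp_all add: G_def power_divide)
  have f_cases: "f l = (if l = i \<and> l = j then (\<lambda>t. t\<^sup>2)
      else if l = i \<or> l = j then (\<lambda>t. t) else (\<lambda>_. 1))" for l
    by (auto simp: f_def fun_eq_iff power2_eq_square)
  have f_int: "integrable G (f l)" for l
    unfolding f_cases using G by simp
  have "(\<Prod>l<d. f l (z l)) = z i * z j" for z
    using i j by (simp add: f_def prod.distrib)
  moreover have "(\<Prod>l<d. \<integral>t. f l t \<partial>G) = (if i = j then 1 / lam else 0)"
  proof (cases "i = j")
    case True
    then have "(\<Prod>l<d. \<integral>t. f l t \<partial>G) = (\<Prod>l<d. if l = i then 1 / lam else 1)"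
      using G by (intro prod.cong refl) (simp add: f_cases G.prob_space)
    then show ?thesis
      using True i by simp
  next
    case False
    then have "(\<integral>t. f i t \<partial>G) = 0"
      unfolding f_cases using G by simp
    then have "(\<Prod>l<d. \<integral>t. f l t \<partial>G) = 0"
      using i by (intro prod_zero) auto
    then show ?thesis
      using False by simp
  qed
  ultimately show "integrable (gauss d lam) (\<lambda>z. z i * z j)"
    "(\<integral>z. z i * z j \<partial>gauss d lam) = (if i = j then 1 / lam else 0)"
    using gauss_integral_prod [OF lam, of d f, folded G_def] f_int by simp_all
qed

lemma dinner_commute: "dinner d u w = dinner d w u"
  unfolding dinner_def by (simp add: mult.commute)

lemma dinner_add_right: "dinner d u (\<lambda>i. w i + z i) = dinner d u w + dinner d u z"
  unfolding dinner_def by (simp add: distrib_left sum.distrib)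

lemma dinner_self_nonneg: "0 \<le> dinner d u u"
  unfolding dinner_def by (intro sum_nonneg) auto

lemma dnorm_nonneg: "0 \<le> dnorm d u"
  unfolding dnorm_def using dinner_self_nonneg by simp

lemma dnorm_power2: "(dnorm d u)\<^sup>2 = dinner d u u"
  unfolding dnorm_def using dinner_self_nonneg by simp

lemma gauss_dinner_moments:
  assumes lam: "0 < lam"
  shows "integrable (gauss d lam) (\<lambda>z. dinner d u z)"
    and "(\<integral>z. dinner d u z \<partial>gauss d lam) = 0"
    and "integrable (gauss d lam) (\<lambda>z. (dinner d u z)\<^sup>2)"
    and "(\<integral>z. (dinner d u z)\<^sup>2 \<partial>gauss d lam) = dinner d u u / lam"
proof -
  note mean = gauss_coordinate_mean [OF lam] and cov = gauss_coordinate_covariance [OF lam]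
  show "integrable (gauss d lam) (\<lambda>z. dinner d u z)" "(\<integral>z. dinner d u z \<partial>gauss d lam) = 0"
    unfolding dinner_def using mean by (auto simp: Bochner_Integration.integral_sum)
  have square: "(dinner d u z)\<^sup>2 = (\<Sum>i<d. \<Sum>j<d. u i * u j * (z i * z j))" for z
    unfolding dinner_def power2_eq_square sum_product by (simp add: algebra_simps)
  have term_int: "integrable (gauss d lam) (\<lambda>z. u i * u j * (z i * z j))" if "i < d" "j < d" for i j
    using cov(1) [OF that] by simp
  show "integrable (gauss d lam) (\<lambda>z. (dinner d u z)\<^sup>2)"
    unfolding square by (intro Bochner_Integration.integrable_sum term_int) auto
  have "(\<integral>z. (dinner d u z)\<^sup>2 \<partial>gauss d lam)
      = (\<Sum>i<d. \<integral>z. (\<Sum>j<d. u i * u j * (z i * z j)) \<partial>gauss d lam)"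
    unfolding square
    by (intro Bochner_Integration.integral_sum Bochner_Integration.integrable_sum term_int) auto
  also have "\<dots> = (\<Sum>i<d. \<Sum>j<d. \<integral>z. u i * u j * (z i * z j) \<partial>gauss d lam)"
    by (intro sum.cong refl Bochner_Integration.integral_sum term_int) auto
  also have "\<dots> = (\<Sum>i<d. \<Sum>j<d. u i * u j * (if i = j then 1 / lam else 0))"
    using cov(2) by simp
  also have "\<dots> = dinner d u u / lam"
    unfolding dinner_def by (simp add: if_distrib [of "(*) _"] sum_divide_distrib cong: if_cong)
  finally show "(\<integral>z. (dinner d u z)\<^sup>2 \<partial>gauss d lam) = dinner d u u / lam" .
qed

lemma softmax_Y_shift:
  "softmax_Y d k x (\<lambda>i. m i + z i) a = softmax k (\<lambda>b. dinner d (x b) m + dinner d (x b) z) a"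
  unfolding softmax_Y_def softmax_def dinner_add_right ..

lemma pibar_eq_softmax: "pibar d k x mu c a = softmax k (\<lambda>b. dinner d (x b) (mu c)) a"
  unfolding pibar_def softmax_def ..

lemma abs_Pac_minus_pibar_le:
  assumes lam: "0 < lam" and a: "a < k"
  shows "\<bar>Pac d k lam x mu c a - pibar d k x mu c a\<bar> \<le> 2 * (\<Sum>b<k. (dnorm d (x b))\<^sup>2) / lam"
proof -
  interpret prob_space "gauss d lam"
    using prob_space_gauss [OF lam] .
  note moments = gauss_dinner_moments [OF lam]
  have "\<bar>Pac d k lam x mu c a - pibar d k x mu c a\<bar> \<le> 2 * (\<Sum>b<k. dinner d (x b) (x b) / lam)"
    unfolding Pac_def softmax_Y_shift pibar_eq_softmax
    using abs_expectation_softmax_add_le [OF a, of "\<lambda>b z. dinner d (x b) z"] moments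
    by (simp add: borel_measurable_integrable)
  then show ?thesis
    by (simp add: dnorm_power2 sum_divide_distrib [symmetric])
qed

lemma abs_Qacv_le:
  assumes lam: "0 < lam" and a: "a < k"
  shows "\<bar>Qacv d k lam x mu c a v\<bar> \<le> 2 * dnorm d v * (\<Sum>b<k. dnorm d (x b)) / lam"
proof -
  interpret prob_space "gauss d lam"
    using prob_space_gauss [OF lam] .
  note moments = gauss_dinner_moments [OF lam]
  have meas: "dinner d u \<in> borel_measurable (gauss d lam)" for u
    using moments(1) by (rule borel_measurable_integrable)
  have "Qacv d k lam x mu c a v
      = (\<integral>z. dinner d v z * softmax k (\<lambda>b. dinner d (x b) (mu c) + dinner d (x b) z) a \<partial>gauss d lam)"
    unfolding Qacv_def softmax_Y_shift by (simp only: dinner_commute [of d _ v])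
  also have "\<bar>\<dots>\<bar> \<le> 2 * (\<Sum>b<k. sqrt (\<integral>z. (dinner d v z)\<^sup>2 \<partial>gauss d lam)
                                 * sqrt (\<integral>z. (dinner d (x b) z)\<^sup>2 \<partial>gauss d lam))"
    by (rule abs_expectation_mult_softmax_add_le [OF a meas moments(3) meas moments(3) moments(2)])
  also have "\<dots> = 2 * (\<Sum>b<k. sqrt (dinner d v v / lam) * sqrt (dinner d (x b) (x b) / lam))"
    by (simp only: moments(4))
  also have "\<dots> = 2 * (\<Sum>b<k. dnorm d v * dnorm d (x b) / lam)"
    using lam by (simp add: dnorm_def real_sqrt_divide)
  also have "\<dots> = 2 * dnorm d v * (\<Sum>b<k. dnorm d (x b)) / lam"
    by (simp add: sum_distrib_left sum_divide_distrib mult.assoc)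
  finally show ?thesis .
qed

lemma sum_dnorm_le_card_mult:
  assumes "\<forall>b<k. dnorm d (x b) \<le> L0"
  shows "(\<Sum>b<k. dnorm d (x b)) \<le> real k * L0"
    and "(\<Sum>b<k. (dnorm d (x b))\<^sup>2) \<le> real k * L0\<^sup>2"
  using sum_bounded_above [of "{..<k}" "\<lambda>b. dnorm d (x b)" L0]
    sum_bounded_above [of "{..<k}" "\<lambda>b. (dnorm d (x b))\<^sup>2" "L0\<^sup>2"] assms
  by (simp_all add: power_mono dnorm_nonneg)

theorem lemma5p4:
  fixes k :: nat and L0 :: real
  assumes "L0 > 0"
  shows "\<exists>C lam0. \<forall>lam \<ge> lam0. \<forall>d::nat. \<forall>mu x :: nat \<Rightarrow> nat \<Rightarrow> real.
           (\<forall>c<k. dnorm d (mu c) = 1) \<longrightarrow> (\<forall>b<k. dnorm d (x b) \<le> L0) \<longrightarrow>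
           (\<forall>a<k. \<forall>c<k. \<forall>v :: nat \<Rightarrow> real.
              \<bar>Pac d k lam x mu c a - pibar d k x mu c a\<bar> \<le> C / lam \<and>
              \<bar>Qacv d k lam x mu c a v\<bar> \<le> C * dnorm d v / lam)"
proof -
  define C where "C = 2 * real k * L0\<^sup>2 + 2 * real k * L0"
  have C_ge: "2 * real k * L0\<^sup>2 \<le> C" "2 * real k * L0 \<le> C"
    unfolding C_def using assms by auto
  have bounds: "\<bar>Pac d k lam x mu c a - pibar d k x mu c a\<bar> \<le> C / lam \<and>
        \<bar>Qacv d k lam x mu c a v\<bar> \<le> C * dnorm d v / lam"
    if "1 \<le> lam" and x: "\<forall>b<k. dnorm d (x b) \<le> L0" and a: "a < k" for lam d x mu c a v
  proof
    have lam: "0 < lam"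
      using that(1) by simp
    note sums = sum_dnorm_le_card_mult [OF x]
    have "2 * (\<Sum>b<k. (dnorm d (x b))\<^sup>2) \<le> C"
      using sums(2) C_ge(1) by linarith
    with lam show "\<bar>Pac d k lam x mu c a - pibar d k x mu c a\<bar> \<le> C / lam"
      by (intro order_trans [OF abs_Pac_minus_pibar_le [OF lam a] divide_right_mono]) auto
    have "2 * dnorm d v * (\<Sum>b<k. dnorm d (x b)) \<le> 2 * dnorm d v * (real k * L0)"
      using sums(1) dnorm_nonneg [of d v] by (intro mult_left_mono) auto
    also have "\<dots> = (2 * real k * L0) * dnorm d v"
      by simp
    also have "\<dots> \<le> C * dnorm d v"
      by (rule mult_right_mono [OF C_ge(2) dnorm_nonneg])
    finally show "\<bar>Qacv d k lam x mu c a v\<bar> \<le> C * dnorm d v / lam"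
      using lam by (intro order_trans [OF abs_Qacv_le [OF lam a] divide_right_mono]) auto
  qed
  then show ?thesis
    by (intro exI [of _ C] exI [of _ 1] allI impI) (rule bounds; assumption)
qed

end
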